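(* Let $\mathcal{C}\subseteq(\mathbb{C}^a)^{\otimes n}$ be a quantum locally recoverable code of block length $n$, dimension $k>0$, distance $d$, and locality $r$. Then \[ k \leq n-2(d-1)-\left\lfloor\frac{n-(d-1)}{r}\right\rfloor-\left\lfloor\frac{n-2(d-1)-\left\lfloor\frac{n-(d-1)}{r}\right\rfloor}{r}\right\rfloor . \]
   Context: $[n]=\{0,\dots,n-1\}$. A quantum code of block length $n$, local dimension $a$ and dimension $k$ is an $a^k$-dimensional linear subspace $\mathcal{C}\subseteq(\mathbb{C}^a)^{\otimes n}$; a code state is (the density matrix of) a unit vector in $\mathcal{C}$. For a state $\rho$ on qudits $A$ and $B\subseteq A$, $\rho_B$ denotes the reduced density matrix on $B$; $\mathcal{M}(A)$ denotes density matrices on qudits $A$. The code can decode from erasures in $S\subseteq[n]$ if there is a quantum channel $\mathrm{Dec}^S:\mathcal{M}([n]\setminus S)\to\mathcal{M}([n])$ with $\mathrm{Dec}^S(\psi_{[n]\setminus S})=\psi$ for every code state $\psi$. The distance $d$ is the maximum $d$ such that the code can decode from erasures in every $S$ with $|S|<d$. The code is a quantum locally recoverable code (qLRC) of locality $r$ if for every $i\in[n]$ there is a set $I_i\subseteq[n]$ with $i\in I_i$, $|I_i|\le r$, and a quantum channel $\mathrm{Rec}_i:\mathcal{M}(I_i\setminus\{i\})\to\mathcal{M}(I_i)$ such that $(\mathrm{Rec}_i\otimes \mathrm{id}_{[n]\setminus I_i})(\psi_{[n]\setminus\{i\}})=\psi$ for every code state $\psi$. *)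

theory Defs
  imports "HOL-Analysis.Analysis" "HOL-Library.Function_Algebras"
begin

text \<open>Qudits are indexed by natural numbers; the block is [n] = {..<n}.
  A computational-basis configuration of the qudits in a set A is a function
  x :: nat => nat with x i < a for i in A and x i = 0 for i outside A.
  Vectors of (C^a)^{tensor A} are functions cfg => complex, operators
  (matrices) on the qudits A are functions cfg => cfg => complex.\<close>

type_synonym cfg = "nat \<Rightarrow> nat"
type_synonym qvec = "cfg \<Rightarrow> complex"
type_synonym qop = "cfg \<Rightarrow> cfg \<Rightarrow> complex"

definition cfgs :: "nat \<Rightarrow> nat set \<Rightarrow> cfg set" where
  "cfgs a A = {x. (\<forall>i. i \<notin> A \<longrightarrow> x i = 0) \<and> (\<forall>i\<in>A. x i < a)}"

definition restr :: "nat set \<Rightarrow> cfg \<Rightarrow> cfg" where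
  "restr B x = (\<lambda>i. if i \<in> B then x i else 0)"

definition merge :: "nat set \<Rightarrow> cfg \<Rightarrow> cfg \<Rightarrow> cfg" where
  "merge A x z = (\<lambda>i. if i \<in> A then x i else z i)"

definition vscale :: "complex \<Rightarrow> qvec \<Rightarrow> qvec" where
  "vscale c v = (\<lambda>x. c * v x)"

definition qvecs :: "nat \<Rightarrow> nat \<Rightarrow> qvec set" where
  "qvecs a n = {v. \<forall>x. x \<notin> cfgs a {..<n} \<longrightarrow> v x = 0}"

definition quantum_code :: "nat \<Rightarrow> nat \<Rightarrow> nat \<Rightarrow> qvec set \<Rightarrow> bool" where
  "quantum_code a n k C \<longleftrightarrow> C \<subseteq> qvecs a n \<and> module.subspace vscale C
     \<and> vector_space.dim vscale C = a ^ k"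

definition code_state :: "nat \<Rightarrow> nat \<Rightarrow> qvec set \<Rightarrow> qvec \<Rightarrow> bool" where
  "code_state a n C \<psi> \<longleftrightarrow> \<psi> \<in> C \<and> (\<Sum>x\<in>cfgs a {..<n}. (cmod (\<psi> x))\<^sup>2) = 1"

text \<open>Reduced density matrix on B of the pure state psi on [n]
  (partial trace of |psi><psi| over [n] - B).\<close>
definition reduced :: "nat \<Rightarrow> nat \<Rightarrow> nat set \<Rightarrow> qvec \<Rightarrow> qop" where
  "reduced a n B \<psi> = (\<lambda>x y. if x \<in> cfgs a B \<and> y \<in> cfgs a B then
      (\<Sum>z\<in>cfgs a ({..<n} - B). \<psi> (merge B x z) * cnj (\<psi> (merge B y z))) else 0)"

text \<open>Quantum channel M(A) -> M(B), given by a (finite) Kraus representation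
  Ks: each Kraus operator K maps basis configurations of A to those of B,
  and sum_K K^dagger K = identity on A (trace preservation).\<close>
definition kraus :: "nat \<Rightarrow> nat set \<Rightarrow> nat set \<Rightarrow> qop list \<Rightarrow> bool" where
  "kraus a A B Ks \<longleftrightarrow>
     (\<forall>K\<in>set Ks. \<forall>y x. K y x \<noteq> 0 \<longrightarrow> y \<in> cfgs a B \<and> x \<in> cfgs a A) \<and>
     (\<forall>x\<in>cfgs a A. \<forall>x'\<in>cfgs a A.
        (\<Sum>K\<leftarrow>Ks. \<Sum>y\<in>cfgs a B. cnj (K y x) * K y x') = (if x = x' then 1 else 0))"

text \<open>Apply (Phi tensor id_E) to a matrix rho on the qudits A \<union> E
  (A, E disjoint), where Phi has Kraus operators Ks from A to B;
  the result is a matrix on B \<union> E.\<close>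
definition apply_ch :: "nat \<Rightarrow> nat set \<Rightarrow> nat set \<Rightarrow> nat set \<Rightarrow> qop list \<Rightarrow> qop \<Rightarrow> qop" where
  "apply_ch a A B E Ks \<rho> = (\<lambda>y y'. if y \<in> cfgs a (B \<union> E) \<and> y' \<in> cfgs a (B \<union> E) then
      (\<Sum>K\<leftarrow>Ks. \<Sum>x\<in>cfgs a A. \<Sum>x'\<in>cfgs a A.
         K (restr B y) x * \<rho> (merge A x (restr E y)) (merge A x' (restr E y'))
           * cnj (K (restr B y') x')) else 0)"

definition decodable :: "nat \<Rightarrow> nat \<Rightarrow> qvec set \<Rightarrow> nat set \<Rightarrow> bool" where
  "decodable a n C S \<longleftrightarrow> (\<exists>Ks. kraus a ({..<n} - S) {..<n} Ks \<and>
     (\<forall>\<psi>. code_state a n C \<psi> \<longrightarrow>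
        apply_ch a ({..<n} - S) {..<n} {} Ks (reduced a n ({..<n} - S) \<psi>)
          = reduced a n {..<n} \<psi>))"

text \<open>d is the distance: the maximum d such that decoding is possible from
  every erasure set S \<subseteq> [n] with |S| < d (the property is downward closed
  in d, so "maximum" means: it holds for d and fails for d+1).\<close>
definition decodes_below :: "nat \<Rightarrow> nat \<Rightarrow> qvec set \<Rightarrow> nat \<Rightarrow> bool" where
  "decodes_below a n C d \<longleftrightarrow> (\<forall>S. S \<subseteq> {..<n} \<and> card S < d \<longrightarrow> decodable a n C S)"

definition code_distance :: "nat \<Rightarrow> nat \<Rightarrow> qvec set \<Rightarrow> nat \<Rightarrow> bool" where
  "code_distance a n C d \<longleftrightarrow> decodes_below a n C d \<and> \<not> decodes_below a n C (Suc d)"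

definition qLRC_locality :: "nat \<Rightarrow> nat \<Rightarrow> qvec set \<Rightarrow> nat \<Rightarrow> bool" where
  "qLRC_locality a n C r \<longleftrightarrow> (\<forall>i<n. \<exists>I Ks. i \<in> I \<and> I \<subseteq> {..<n} \<and> card I \<le> r \<and>
      kraus a (I - {i}) I Ks \<and>
      (\<forall>\<psi>. code_state a n C \<psi> \<longrightarrow>
         apply_ch a (I - {i}) I ({..<n} - I) Ks (reduced a n ({..<n} - {i}) \<psi>)
           = reduced a n {..<n} \<psi>))"

end

theory Submission
  imports Defs
begin

text \<open>
  First, both erasure decoding and local recovery yield the Knill-Laflamme
  condition: a decodable set S is correctable, and if E is correctable and disjoint from the
  repair group I of a qudit i, then so is E \<union> {i}, because the recovery channel of i acts
  trivially on E and its Kraus operators act on the code as scalars. A greedy choice then gives,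
  inside every W, a correctable subset of size min |W| (d - 1) + (|W| - (d - 1)) div r; we take
  one such X in [n] and another Y in [n] - X.

  Second, a Singleton-type bound for disjoint correctable X and Y: writing D_P for the dimension
  of the support of the marginal of the code on P and R for the remaining qudits,
  correctability of X gives a^k D_X \<le> D_(Y \<union> R) \<le> D_Y a^|R|, and symmetrically with X and Y
  exchanged, so a^k \<le> a^|R|, i.e. k + |X| + |Y| \<le> n. The stated formula is the arithmetic
  consequence of the two size bounds.
\<close>

global_interpretation V: vector_space vscale
  by unfold_locales (auto simp: vscale_def fun_eq_iff algebra_simps)

lemma vscale_apply [simp]: "vscale c v x = c * v x"
  by (simp add: vscale_def)

lemma sum_fun_apply: "(sum F I) x = (\<Sum>i\<in>I. F i x)"
  by (induction I rule: infinite_finite_induct) auto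

lemma sum_list_sum_swap: "(\<Sum>K\<leftarrow>Ks. \<Sum>x\<in>X. f K x) = (\<Sum>x\<in>X. \<Sum>K\<leftarrow>Ks. f K x)"
  by (induction Ks) (simp_all add: sum.distrib)

lemma sum_mult_cnj_eq_0D:
  fixes f :: "'a \<Rightarrow> complex"
  assumes "finite D" "(\<Sum>y\<in>D. f y * cnj (f y)) = 0" "y \<in> D"
  shows "f y = 0"
proof -
  have "complex_of_real (\<Sum>y\<in>D. (norm (f y))\<^sup>2) = 0"
    using assms(2) by (simp only: of_real_sum complex_norm_square)
  then have "(\<Sum>y\<in>D. (norm (f y))\<^sup>2) = 0" by (simp only: of_real_eq_0_iff)
  then have "(norm (f y))\<^sup>2 = 0" using assms(1,3) by (simp add: sum_nonneg_eq_0_iff)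
  then show ?thesis by simp
qed

lemma merge_in_cfgs: "p \<in> cfgs a P \<Longrightarrow> q \<in> cfgs a Q \<Longrightarrow> merge P p q \<in> cfgs a (P \<union> Q)"
  by (auto simp: cfgs_def merge_def)

lemma restr_in_cfgs: "z \<in> cfgs a R \<Longrightarrow> P \<subseteq> R \<Longrightarrow> restr P z \<in> cfgs a P"
  by (auto simp: cfgs_def restr_def)

lemma merge_commute_cfgs: "w \<in> cfgs a (N - T) \<Longrightarrow> t \<in> cfgs a T \<Longrightarrow> merge (N - T) w t = merge T t w"
  by (auto simp: merge_def cfgs_def fun_eq_iff)

lemma merge_restr_cfgs: "z \<in> cfgs a (P \<union> Q) \<Longrightarrow> merge P (restr P z) (restr Q z) = z"
  by (auto simp: merge_def restr_def cfgs_def fun_eq_iff)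

lemma cfgs_split_bij:
  assumes "P \<inter> Q = {}"
  shows "bij_betw (\<lambda>(p, q). merge P p q) (cfgs a P \<times> cfgs a Q) (cfgs a (P \<union> Q))"
proof (rule bij_betwI[where g="\<lambda>z. (restr P z, restr Q z)"])
  show "(\<lambda>(p, q). merge P p q) \<in> cfgs a P \<times> cfgs a Q \<rightarrow> cfgs a (P \<union> Q)"
    by (auto intro: merge_in_cfgs)
  show "(\<lambda>z. (restr P z, restr Q z)) \<in> cfgs a (P \<union> Q) \<rightarrow> cfgs a P \<times> cfgs a Q"
    by (auto intro!: restr_in_cfgs)
  show "(\<lambda>z. (restr P z, restr Q z)) ((\<lambda>(p, q). merge P p q) x) = x"
    if "x \<in> cfgs a P \<times> cfgs a Q" for x
    using that assms by (cases x) (auto simp: cfgs_def merge_def restr_def fun_eq_iff)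
  show "(\<lambda>(p, q). merge P p q) (restr P y, restr Q y) = y" if "y \<in> cfgs a (P \<union> Q)" for y
    using that by (simp add: merge_restr_cfgs)
qed

lemma cfgs_empty: "cfgs a {} = {\<lambda>_. 0}"
  by (auto simp: cfgs_def)

lemma cfgs_singleton: "cfgs a {i} = (\<lambda>v j. if j = i then v else 0) ` {..<a}"
  by (auto simp: cfgs_def fun_eq_iff image_def)

lemma finite_card_cfgs:
  assumes "finite A"
  shows "finite (cfgs a A) \<and> card (cfgs a A) = a ^ card A"
  using assms
proof (induction A rule: finite_induct)
  case empty
  then show ?case by (simp add: cfgs_empty)
next
  case (insert i A)
  have single: "finite (cfgs a {i}) \<and> card (cfgs a {i}) = a"
    unfolding cfgs_singleton by (subst card_image) (auto simp: inj_on_def fun_eq_iff)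
  have bij: "bij_betw (\<lambda>(p, q). merge {i} p q) (cfgs a {i} \<times> cfgs a A) (cfgs a ({i} \<union> A))"
    using insert by (intro cfgs_split_bij) auto
  show ?case
    using bij_betw_finite[OF bij] bij_betw_same_card[OF bij] single insert
    by (simp add: card_cartesian_product)
qed

lemma finite_cfgs [simp, intro]: "finite A \<Longrightarrow> finite (cfgs a A)"
  using finite_card_cfgs by blast

lemma card_cfgs: "finite A \<Longrightarrow> card (cfgs a A) = a ^ card A"
  using finite_card_cfgs by blast

lemma sum_cfgs_Un:
  assumes "P \<inter> Q = {}" "finite P" "finite Q"
  shows "(\<Sum>z\<in>cfgs a (P \<union> Q). f z) = (\<Sum>p\<in>cfgs a P. \<Sum>q\<in>cfgs a Q. f (merge P p q))"
proof -
  have "(\<Sum>z\<in>cfgs a (P \<union> Q). f z) = (\<Sum>x\<in>cfgs a P \<times> cfgs a Q. f ((\<lambda>(p, q). merge P p q) x))"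
    using cfgs_split_bij[OF assms(1), of a] by (simp add: sum.reindex_bij_betw)
  then show ?thesis by (simp add: sum.cartesian_product split_def)
qed

definition supported :: "nat \<Rightarrow> nat set \<Rightarrow> qvec set" where
  "supported a P = {f. \<forall>w. w \<notin> cfgs a P \<longrightarrow> f w = 0}"

definition ket :: "cfg \<Rightarrow> qvec" where
  "ket z = (\<lambda>w. if w = z then 1 else 0)"

lemma qvecs_eq_supported: "qvecs a n = supported a {..<n}"
  by (simp add: qvecs_def supported_def)

lemma subspace_supported: "V.subspace (supported a P)"
  by (auto simp: V.subspace_def supported_def)

lemma supported_subset_span_kets:
  assumes "finite P"
  shows "supported a P \<subseteq> V.span (ket ` cfgs a P)"
proof
  fix f assume f: "f \<in> supported a P"
  have "f = (\<Sum>z\<in>cfgs a P. vscale (f z) (ket z))"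
  proof
    fix w
    have "(\<Sum>z\<in>cfgs a P. vscale (f z) (ket z)) w = (\<Sum>z\<in>cfgs a P. if w = z then f z else 0)"
      by (simp add: sum_fun_apply ket_def if_distrib cong: if_cong)
    then show "f w = (\<Sum>z\<in>cfgs a P. vscale (f z) (ket z)) w"
      using f assms by (simp add: supported_def)
  qed
  also have "\<dots> \<in> V.span (ket ` cfgs a P)"
    by (intro V.span_sum V.span_scale V.span_base) auto
  finally show "f \<in> V.span (ket ` cfgs a P)" .
qed

lemma independent_card_le_dim_supported:
  assumes P: "finite P" and B: "V.independent B" "B \<subseteq> V.span G" and G: "G \<subseteq> supported a P"
  shows "finite B \<and> card B \<le> V.dim G"
proof -
  obtain Bg where Bg: "Bg \<subseteq> G" "V.independent Bg" "G \<subseteq> V.span Bg" "card Bg = V.dim G"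
    using V.basis_exists by blast
  have "Bg \<subseteq> V.span (ket ` cfgs a P)"
    using Bg(1) G supported_subset_span_kets[OF P] by blast
  then have "finite Bg"
    using V.independent_span_bound[OF finite_imageI[OF finite_cfgs[OF P]] Bg(2)] by auto
  moreover have "B \<subseteq> V.span Bg"
    using B(2) Bg(3) V.span_minimal[OF _ V.subspace_span] by blast
  ultimately show ?thesis using V.independent_span_bound[of Bg B] B(1) Bg(4) by auto
qed

lemma finite_basis_supported:
  assumes "finite P" "G \<subseteq> supported a P"
  obtains Bg where "Bg \<subseteq> G" "V.independent Bg" "G \<subseteq> V.span Bg" "card Bg = V.dim G" "finite Bg"
proof -
  obtain Bg where Bg: "Bg \<subseteq> G" "V.independent Bg" "G \<subseteq> V.span Bg" "card Bg = V.dim G"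
    using V.basis_exists by blast
  moreover have "finite Bg"
    using independent_card_le_dim_supported[OF assms(1) Bg(2) _ assms(2)] Bg(1) V.span_superset
    by blast
  ultimately show ?thesis using that by blast
qed

definition qinner :: "nat \<Rightarrow> nat set \<Rightarrow> qvec \<Rightarrow> qvec \<Rightarrow> complex" where
  "qinner a D f g = (\<Sum>z\<in>cfgs a D. f z * cnj (g z))"

lemma qinner_cong:
  "(\<And>z. z \<in> cfgs a D \<Longrightarrow> f z = f' z) \<Longrightarrow> (\<And>z. z \<in> cfgs a D \<Longrightarrow> g z = g' z)
   \<Longrightarrow> qinner a D f g = qinner a D f' g'"
  unfolding qinner_def by (intro sum.cong) auto

lemma qinner_scale: "qinner a D (\<lambda>w. c * f w) (\<lambda>w. c' * g w) = c * cnj c' * qinner a D f g"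
  by (simp add: qinner_def sum_distrib_left mult_ac)

lemma qinner_add_right: "qinner a D f (g + h) = qinner a D f g + qinner a D f h"
  by (simp add: qinner_def algebra_simps sum.distrib)

lemma qinner_scale_right: "qinner a D f (vscale c g) = cnj c * qinner a D f g"
  by (simp add: qinner_def sum_distrib_left mult_ac)

lemma qinner_scale_left: "qinner a D (vscale c g) f = c * qinner a D g f"
  by (simp add: qinner_def sum_distrib_left mult_ac)

lemma qinner_sum_left: "finite I \<Longrightarrow> qinner a D (\<Sum>i\<in>I. F i) f = (\<Sum>i\<in>I. qinner a D (F i) f)"
  by (simp add: qinner_def sum_fun_apply sum_distrib_right) (rule sum.swap)

lemma qinner_self_eq_0D: "finite D \<Longrightarrow> qinner a D f f = 0 \<Longrightarrow> z \<in> cfgs a D \<Longrightarrow> f z = 0"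
  using sum_mult_cnj_eq_0D[of "cfgs a D" f z] unfolding qinner_def by auto

lemma qinner_orthogonal_span:
  assumes "\<And>g. g \<in> G \<Longrightarrow> qinner a D f g = 0" "h \<in> V.span G"
  shows "qinner a D f h = 0"
proof -
  have "V.subspace {h. qinner a D f h = 0}"
    by (auto simp: V.subspace_def qinner_add_right qinner_scale_right) (simp add: qinner_def)
  then have "V.span G \<subseteq> {h. qinner a D f h = 0}"
    using assms(1) by (intro V.span_minimal) auto
  then show ?thesis using assms(2) by auto
qed

lemma kraus_isometry:
  assumes "kraus a A B Ks" "finite A"
  shows "(\<Sum>K\<leftarrow>Ks. \<Sum>b\<in>cfgs a B. (\<Sum>x\<in>cfgs a A. K b x * g x) * cnj (\<Sum>x'\<in>cfgs a A. K b x' * h x'))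
         = (\<Sum>x\<in>cfgs a A. g x * cnj (h x))"
proof -
  have "(\<Sum>K\<leftarrow>Ks. \<Sum>b\<in>cfgs a B. (\<Sum>x\<in>cfgs a A. K b x * g x) * cnj (\<Sum>x'\<in>cfgs a A. K b x' * h x'))
      = (\<Sum>K\<leftarrow>Ks. \<Sum>b\<in>cfgs a B. \<Sum>x\<in>cfgs a A. \<Sum>x'\<in>cfgs a A.
           cnj (K b x') * K b x * (g x * cnj (h x')))"
    by (simp add: sum_product mult_ac)
  also have "\<dots> = (\<Sum>x\<in>cfgs a A. \<Sum>x'\<in>cfgs a A.
           (\<Sum>K\<leftarrow>Ks. \<Sum>b\<in>cfgs a B. cnj (K b x') * K b x) * (g x * cnj (h x')))"
    by (simp add: sum_distrib_right sum_list_sum_swap sum.swap[of _ "cfgs a B"] sum_list_mult_const)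
  also have "\<dots> = (\<Sum>x\<in>cfgs a A. \<Sum>x'\<in>cfgs a A. (if x = x' then g x * cnj (h x') else 0))"
    using assms(1) unfolding kraus_def by (intro sum.cong refl) auto
  also have "\<dots> = (\<Sum>x\<in>cfgs a A. g x * cnj (h x))"
    using assms(2) by simp
  finally show ?thesis .
qed

definition slice :: "nat set \<Rightarrow> cfg \<Rightarrow> qvec \<Rightarrow> qvec" where
  "slice T t v = (\<lambda>z. v (merge T t z))"

text \<open>(K \<otimes> id_E) u for a Kraus operator K from A to B; apply_ch Ks rho is the sum over K
  of (K \<otimes> id_E) rho (K \<otimes> id_E)^*.\<close>
definition op_apply :: "nat \<Rightarrow> nat set \<Rightarrow> nat set \<Rightarrow> nat set \<Rightarrow> qop \<Rightarrow> qvec \<Rightarrow> qvec" where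
  "op_apply a A B E K u = (\<lambda>y. \<Sum>x\<in>cfgs a A. K (restr B y) x * u (merge A x (restr E y)))"

lemma slice_slice: "slice E e (slice T t v) = slice (T \<union> E) (merge T t e) v"
  unfolding slice_def by (intro ext arg_cong[where f=v]) (auto simp: merge_def fun_eq_iff)

lemma slice_Un:
  assumes "z \<in> cfgs a (E \<union> T)"
  shows "slice (E \<union> T) z v = slice E (restr E z) (slice T (restr T z) v)"
  using merge_restr_cfgs[of z a T E] assms by (simp add: slice_slice Un_commute)

lemma slice_op_apply:
  assumes "A \<inter> E' = {}" "B \<inter> E' = {}" "E' \<subseteq> E"
  shows "slice E' e (op_apply a A B E K u) = op_apply a A B (E - E') K (slice E' e u)"
proof -
  have "restr B (merge E' e z) = restr B z" for z
    using assms by (auto simp: restr_def merge_def fun_eq_iff)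
  moreover have "merge A x (restr E (merge E' e z)) = merge E' e (merge A x (restr (E - E') z))" for x z
    using assms by (auto simp: restr_def merge_def fun_eq_iff)
  ultimately show ?thesis by (simp add: slice_def op_apply_def)
qed

lemma op_apply_slice_add:
  "op_apply a A B E K (slice T t (\<psi> + \<phi>)) y = op_apply a A B E K (slice T t \<psi>) y + op_apply a A B E K (slice T t \<phi>) y"
  by (simp add: op_apply_def slice_def algebra_simps sum.distrib)

lemma op_apply_slice_scale:
  "op_apply a A B E K (slice T t (vscale c \<psi>)) y = c * op_apply a A B E K (slice T t \<psi>) y"
  by (simp add: op_apply_def slice_def sum_distrib_left mult_ac)

lemma kraus_inner_op_apply:
  assumes kr: "kraus a A B Ks" and fin: "finite A" "finite B" "finite F"
    and dis: "A \<inter> F = {}" "B \<inter> F = {}"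
  shows "(\<Sum>K\<leftarrow>Ks. qinner a (B \<union> F) (op_apply a A B F K u) (op_apply a A B F K v))
         = qinner a (A \<union> F) u v"
proof -
  have restr_merge: "restr B (merge F f b) = b" "restr F (merge F f b) = f"
    if "b \<in> cfgs a B" "f \<in> cfgs a F" for b f
    using that dis by (auto simp: restr_def merge_def cfgs_def fun_eq_iff)
  have "qinner a (B \<union> F) (op_apply a A B F K u) (op_apply a A B F K v)
      = (\<Sum>f\<in>cfgs a F. \<Sum>b\<in>cfgs a B. (\<Sum>x\<in>cfgs a A. K b x * u (merge A x f))
           * cnj (\<Sum>x'\<in>cfgs a A. K b x' * v (merge A x' f)))" for K
    unfolding qinner_def Un_commute[of B F] using dis fin
    by (subst sum_cfgs_Un) (auto simp: op_apply_def restr_merge simp del: cnj_sum intro!: sum.cong)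
  then have "(\<Sum>K\<leftarrow>Ks. qinner a (B \<union> F) (op_apply a A B F K u) (op_apply a A B F K v))
      = (\<Sum>f\<in>cfgs a F. \<Sum>K\<leftarrow>Ks. \<Sum>b\<in>cfgs a B. (\<Sum>x\<in>cfgs a A. K b x * u (merge A x f))
           * cnj (\<Sum>x'\<in>cfgs a A. K b x' * v (merge A x' f)))"
    by (simp only: sum_list_sum_swap)
  also have "\<dots> = (\<Sum>f\<in>cfgs a F. \<Sum>x\<in>cfgs a A. u (merge A x f) * cnj (v (merge A x f)))"
    by (rule sum.cong[OF refl], rule kraus_isometry[OF kr fin(1)])
  also have "\<dots> = qinner a (A \<union> F) u v"
    unfolding qinner_def using dis fin by (subst sum_cfgs_Un) (auto intro: sum.swap)
  finally show ?thesis .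
qed

lemma kraus_inner_slices:
  assumes kr: "kraus a A B Ks" and fin: "finite A" "finite B" "finite E"
    and dis: "A \<inter> E = {}" "B \<inter> E = {}" and E'E: "E' \<subseteq> E"
  shows "(\<Sum>K\<leftarrow>Ks. qinner a ((B \<union> E) - E') (slice E' e (op_apply a A B E K u))
                                         (slice E' e' (op_apply a A B E K v)))
         = qinner a ((A \<union> E) - E') (slice E' e u) (slice E' e' v)"
proof -
  have dis': "A \<inter> E' = {}" "B \<inter> E' = {}" "A \<inter> (E - E') = {}" "B \<inter> (E - E') = {}"
    using dis E'E by auto
  have "(A \<union> E) - E' = A \<union> (E - E')" "(B \<union> E) - E' = B \<union> (E - E')"
    using dis E'E by auto
  then show ?thesis
    using kraus_inner_op_apply[OF kr fin(1,2) _ dis'(3,4), of "slice E' e u" "slice E' e' v"] fin(3)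
    by (simp add: slice_op_apply[OF dis'(1,2) E'E])
qed

section \<open>Recovery channels act on the code as scalars\<close>

lemma reduced_full:
  assumes "y \<in> cfgs a {..<n}" "y' \<in> cfgs a {..<n}"
  shows "reduced a n {..<n} \<psi> y y' = \<psi> y * cnj (\<psi> y')"
proof -
  have "merge {..<n} z (\<lambda>_. 0) = z" if "z \<in> cfgs a {..<n}" for z
    using that by (auto simp: merge_def cfgs_def fun_eq_iff)
  then show ?thesis using assms by (simp add: reduced_def cfgs_empty)
qed

lemma reduced_eq_sum_slices:
  assumes "T \<subseteq> {..<n}" "w \<in> cfgs a ({..<n} - T)" "w' \<in> cfgs a ({..<n} - T)"
  shows "reduced a n ({..<n} - T) \<psi> w w' = (\<Sum>t\<in>cfgs a T. slice T t \<psi> w * cnj (slice T t \<psi> w'))"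
proof -
  have "{..<n} - ({..<n} - T) = T" using assms(1) by auto
  then show ?thesis using assms(2,3) by (simp add: reduced_def slice_def merge_commute_cfgs)
qed

lemma sum_sandwich_outer:
  fixes p q :: "'a \<Rightarrow> complex"
  shows "(\<Sum>x\<in>X. \<Sum>x'\<in>X. p x * (\<Sum>t\<in>T. s t x * cnj (s' t x')) * cnj (q x'))
       = (\<Sum>t\<in>T. (\<Sum>x\<in>X. p x * s t x) * cnj (\<Sum>x'\<in>X. q x' * s' t x'))"
proof -
  have "(\<Sum>x\<in>X. \<Sum>x'\<in>X. p x * (\<Sum>t\<in>T. s t x * cnj (s' t x')) * cnj (q x'))
      = (\<Sum>x\<in>X. \<Sum>x'\<in>X. \<Sum>t\<in>T. (p x * s t x) * cnj (q x' * s' t x'))"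
    by (simp add: sum_distrib_left sum_distrib_right mult_ac)
  also have "\<dots> = (\<Sum>t\<in>T. \<Sum>x\<in>X. \<Sum>x'\<in>X. (p x * s t x) * cnj (q x' * s' t x'))"
    by (subst sum.swap) (rule sum.cong[OF refl], rule sum.swap)
  also have "\<dots> = (\<Sum>t\<in>T. (\<Sum>x\<in>X. p x * s t x) * cnj (\<Sum>x'\<in>X. q x' * s' t x'))"
    by (simp add: sum_product)
  finally show ?thesis .
qed

lemma recovery_outer_sum:
  assumes TN: "T \<subseteq> {..<n}" and AE: "A \<union> E = {..<n} - T" and BE: "B \<union> E = {..<n}"
    and rec: "apply_ch a A B E Ks (reduced a n ({..<n} - T) \<psi>) = reduced a n {..<n} \<psi>"
    and y: "y \<in> cfgs a {..<n}" "y' \<in> cfgs a {..<n}"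
  shows "(\<Sum>K\<leftarrow>Ks. \<Sum>t\<in>cfgs a T.
           op_apply a A B E K (slice T t \<psi>) y * cnj (op_apply a A B E K (slice T t \<psi>) y'))
         = \<psi> y * cnj (\<psi> y')"
proof -
  have w: "merge A x (restr E z) \<in> cfgs a ({..<n} - T)" if "x \<in> cfgs a A" "z \<in> cfgs a {..<n}" for x z
    using merge_in_cfgs[OF that(1) restr_in_cfgs[OF that(2)], of E] AE BE by auto
  have "\<psi> y * cnj (\<psi> y') = apply_ch a A B E Ks (reduced a n ({..<n} - T) \<psi>) y y'"
    using rec reduced_full[OF y] by simp
  also have "\<dots> = (\<Sum>K\<leftarrow>Ks. \<Sum>x\<in>cfgs a A. \<Sum>x'\<in>cfgs a A. K (restr B y) x
        * (\<Sum>t\<in>cfgs a T. slice T t \<psi> (merge A x (restr E y))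
                          * cnj (slice T t \<psi> (merge A x' (restr E y'))))
        * cnj (K (restr B y') x'))"
    using y BE w by (simp add: apply_ch_def reduced_eq_sum_slices[OF TN] cong: sum.cong)
  also have "\<dots> = (\<Sum>K\<leftarrow>Ks. \<Sum>t\<in>cfgs a T.
           op_apply a A B E K (slice T t \<psi>) y * cnj (op_apply a A B E K (slice T t \<psi>) y'))"
    by (simp only: op_apply_def sum_sandwich_outer)
  finally show ?thesis ..
qed

text \<open>If sum_j W_j W_j^* is the pure state psi psi^*, then every W_j is orthogonal to
  every vector orthogonal to psi, hence proportional to psi.\<close>
lemma outer_sum_eq_pure_proportional:
  fixes W :: "'k \<Rightarrow> qvec"
  assumes fin: "finite J" "finite D"
    and outer: "\<And>y y'. y \<in> D \<Longrightarrow> y' \<in> D \<Longrightarrow> (\<Sum>j\<in>J. W j y * cnj (W j y')) = \<psi> y * cnj (\<psi> y')"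
    and norm1: "(\<Sum>y\<in>D. \<psi> y * cnj (\<psi> y)) = 1"
    and j: "j \<in> J"
  shows "\<exists>c. \<forall>y\<in>D. W j y = c * \<psi> y"
proof -
  define ipD where "ipD f g = (\<Sum>y\<in>D. f y * cnj (g y))" for f g :: qvec
  have expand: "ipD f g * cnj (ipD f g) = (\<Sum>y\<in>D. \<Sum>y'\<in>D. (f y * cnj (f y')) * (cnj (g y) * g y'))"
    for f g
    unfolding ipD_def cnj_sum sum_product by (intro sum.cong refl) (simp add: mult_ac)
  have sum_sq: "(\<Sum>j\<in>J. ipD (W j) g * cnj (ipD (W j) g)) = ipD \<psi> g * cnj (ipD \<psi> g)" for g
  proof -
    have "(\<Sum>j\<in>J. ipD (W j) g * cnj (ipD (W j) g))
        = (\<Sum>y\<in>D. \<Sum>y'\<in>D. (\<Sum>j\<in>J. W j y * cnj (W j y')) * (cnj (g y) * g y'))"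
      unfolding expand sum_distrib_right
      by (rule trans[OF sum.swap], rule sum.cong[OF refl], rule sum.swap)
    also have "\<dots> = (\<Sum>y\<in>D. \<Sum>y'\<in>D. (\<psi> y * cnj (\<psi> y')) * (cnj (g y) * g y'))"
      using outer by (intro sum.cong refl) simp
    also have "\<dots> = ipD \<psi> g * cnj (ipD \<psi> g)" unfolding expand ..
    finally show ?thesis .
  qed
  define c where "c = ipD (W j) \<psi>"
  define g where "g = (\<lambda>y. W j y - c * \<psi> y)"
  have psi_g: "ipD \<psi> g = 0"
  proof -
    have "ipD \<psi> g = (\<Sum>y\<in>D. \<psi> y * cnj (W j y)) - cnj c * (\<Sum>y\<in>D. \<psi> y * cnj (\<psi> y))"
      by (simp add: ipD_def g_def algebra_simps sum_subtractf sum_distrib_left)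
    also have "(\<Sum>y\<in>D. \<psi> y * cnj (W j y)) = cnj c"
      by (simp add: c_def ipD_def mult.commute)
    finally show ?thesis using norm1 by simp
  qed
  then have "(\<Sum>j\<in>J. ipD (W j) g * cnj (ipD (W j) g)) = 0"
    using sum_sq[of g] by simp
  then have Wg: "ipD (W j) g = 0"
    using sum_mult_cnj_eq_0D[OF fin(1), of "\<lambda>j. ipD (W j) g"] j by blast
  have "ipD g g = ipD (W j) g - c * ipD \<psi> g"
    by (simp add: ipD_def g_def algebra_simps sum_subtractf sum_distrib_left sum.distrib)
  then have "ipD g g = 0" using Wg psi_g by simp
  then have "\<forall>y\<in>D. g y = 0"
    using sum_mult_cnj_eq_0D[OF fin(2), of g] unfolding ipD_def by blast
  then show ?thesis unfolding g_def by auto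
qed

lemma scalar_if_every_vector_eigen:
  fixes L :: "qvec \<Rightarrow> qvec"
  assumes sub: "V.subspace C" and supp: "C \<subseteq> supported a P"
    and add: "\<And>\<psi> \<phi> y. L (\<psi> + \<phi>) y = L \<psi> y + L \<phi> y"
    and scale: "\<And>c \<psi> y. L (vscale c \<psi>) y = c * L \<psi> y"
    and eigen: "\<And>\<psi>. \<psi> \<in> C \<Longrightarrow> \<exists>c. \<forall>y\<in>cfgs a P. L \<psi> y = c * \<psi> y"
  shows "\<exists>c. \<forall>\<psi>\<in>C. \<forall>y\<in>cfgs a P. L \<psi> y = c * \<psi> y"
proof -
  have zero_out: "\<psi> y = 0" if "\<psi> \<in> C" "y \<notin> cfgs a P" for \<psi> y
    using supp that by (auto simp: supported_def)
  show ?thesis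
  proof (cases "\<forall>\<psi>\<in>C. \<forall>y\<in>cfgs a P. \<psi> y = 0")
    case True
    then have "\<forall>\<psi>\<in>C. \<psi> = 0" using zero_out by (metis ext zero_fun_apply)
    moreover have "L 0 y = 0" for y using scale[of 0 0 y] by (simp add: vscale_def zero_fun_def)
    ultimately show ?thesis by (intro exI[of _ 0]) auto
  next
    case False
    then obtain \<psi>0 y0 where p0: "\<psi>0 \<in> C" "y0 \<in> cfgs a P" "\<psi>0 y0 \<noteq> 0" by auto
    obtain c0 where c0: "\<forall>y\<in>cfgs a P. L \<psi>0 y = c0 * \<psi>0 y" using eigen[OF p0(1)] by auto
    have "\<forall>y\<in>cfgs a P. L \<psi> y = c0 * \<psi> y" if psi: "\<psi> \<in> C" for \<psi>
    proof -
      obtain c1 where c1: "\<forall>y\<in>cfgs a P. L \<psi> y = c1 * \<psi> y" using eigen[OF psi] by auto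
      have "\<psi>0 + \<psi> \<in> C" using sub p0(1) psi by (simp add: V.subspace_add)
      then obtain c2 where c2: "\<forall>y\<in>cfgs a P. L (\<psi>0 + \<psi>) y = c2 * (\<psi>0 + \<psi>) y"
        using eigen by blast
      have rel: "(c0 - c2) * \<psi>0 y = (c2 - c1) * \<psi> y" if "y \<in> cfgs a P" for y
        using c0 c1 c2 add[of \<psi>0 \<psi> y] that by (simp add: algebra_simps)
      show ?thesis
      proof (cases "c0 = c2")
        case True
        then show ?thesis using rel c1 by (auto simp: algebra_simps)
      next
        case False
        define q where "q = (c2 - c1) / (c0 - c2)"
        have p0eq: "\<psi>0 y = q * \<psi> y" if "y \<in> cfgs a P" for y
          using rel[OF that] False by (simp add: q_def field_simps)
        then have "q \<noteq> 0" using p0 by auto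
        have "\<psi> = vscale (1 / q) \<psi>0"
        proof
          fix y show "\<psi> y = vscale (1 / q) \<psi>0 y"
            using p0eq[of y] \<open>q \<noteq> 0\<close> zero_out[OF psi, of y] zero_out[OF p0(1), of y]
            by (cases "y \<in> cfgs a P") auto
        qed
        then have "L \<psi> y = (1 / q) * L \<psi>0 y" for y by (metis scale)
        then show ?thesis using c0 p0eq \<open>q \<noteq> 0\<close> by simp
      qed
    qed
    then show ?thesis by blast
  qed
qed

lemma code_state_rescale:
  assumes Cq: "C \<subseteq> qvecs a n" and sub: "V.subspace C" and psi: "\<psi> \<in> C" "\<psi> \<noteq> 0"
  obtains s \<psi>' where "code_state a n C \<psi>'" "\<psi> = vscale s \<psi>'"
proof -
  obtain y0 where y0: "\<psi> y0 \<noteq> 0" using psi(2) by (auto simp: fun_eq_iff)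
  then have "y0 \<in> cfgs a {..<n}" using Cq psi(1) by (auto simp: qvecs_def)
  define s where "s = (\<Sum>x\<in>cfgs a {..<n}. (cmod (\<psi> x))\<^sup>2)"
  have "(cmod (\<psi> y0))\<^sup>2 \<le> s"
    unfolding s_def by (rule member_le_sum) (use \<open>y0 \<in> cfgs a {..<n}\<close> in auto)
  then have s: "s > 0" using y0 by (smt (verit) zero_less_norm_iff zero_less_power)
  define \<psi>' where "\<psi>' = vscale (complex_of_real (1 / sqrt s)) \<psi>"
  have "\<psi>' \<in> C" unfolding \<psi>'_def using sub psi(1) by (rule V.subspace_scale)
  moreover have "(\<Sum>x\<in>cfgs a {..<n}. (cmod (\<psi>' x))\<^sup>2) = (\<Sum>x\<in>cfgs a {..<n}. (cmod (\<psi> x))\<^sup>2 / s)"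
    using s by (intro sum.cong refl) (simp add: \<psi>'_def norm_divide power_divide)
  then have "(\<Sum>x\<in>cfgs a {..<n}. (cmod (\<psi>' x))\<^sup>2) = 1"
    using s by (simp add: s_def sum_divide_distrib[symmetric])
  moreover have "\<psi> = vscale (complex_of_real (sqrt s)) \<psi>'"
    using s by (auto simp: \<psi>'_def fun_eq_iff)
  ultimately show ?thesis using that code_state_def by blast
qed

lemma recovery_scalar_on_code_state:
  assumes TN: "T \<subseteq> {..<n}" and AE: "A \<union> E = {..<n} - T" and BE: "B \<union> E = {..<n}"
    and rec: "apply_ch a A B E Ks (reduced a n ({..<n} - T) \<psi>) = reduced a n {..<n} \<psi>"
    and norm1: "(\<Sum>x\<in>cfgs a {..<n}. (cmod (\<psi> x))\<^sup>2) = 1"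
    and K: "K \<in> set Ks" and t: "t \<in> cfgs a T"
  shows "\<exists>c. \<forall>y\<in>cfgs a {..<n}. op_apply a A B E K (slice T t \<psi>) y = c * \<psi> y"
proof -
  obtain i where i: "i < length Ks" "K = Ks ! i" using K by (auto simp: in_set_conv_nth)
  let ?W = "\<lambda>j. op_apply a A B E (Ks ! fst j) (slice T (snd j) \<psi>)"
  have outer: "(\<Sum>j\<in>{..<length Ks} \<times> cfgs a T. ?W j y * cnj (?W j y')) = \<psi> y * cnj (\<psi> y')"
    if "y \<in> cfgs a {..<n}" "y' \<in> cfgs a {..<n}" for y y'
    using recovery_outer_sum[OF TN AE BE rec that]
    by (simp add: sum_list_sum_nth atLeast0LessThan sum.cartesian_product split_def)
  have norm: "(\<Sum>y\<in>cfgs a {..<n}. \<psi> y * cnj (\<psi> y)) = 1"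
  proof -
    have "(\<Sum>y\<in>cfgs a {..<n}. \<psi> y * cnj (\<psi> y)) = complex_of_real (\<Sum>y\<in>cfgs a {..<n}. (cmod (\<psi> y))\<^sup>2)"
      by (simp only: of_real_sum complex_norm_square)
    then show ?thesis using norm1 by simp
  qed
  have fin: "finite ({..<length Ks} \<times> cfgs a T)"
    using TN finite_subset by blast
  have "\<exists>c. \<forall>y\<in>cfgs a {..<n}. ?W (i, t) y = c * \<psi> y"
    by (rule outer_sum_eq_pure_proportional[OF fin finite_cfgs outer norm]) (use i t in auto)
  then show ?thesis using i by simp
qed

lemma recovery_acts_as_scalar:
  assumes TN: "T \<subseteq> {..<n}" and AE: "A \<union> E = {..<n} - T" and BE: "B \<union> E = {..<n}"
    and Cq: "C \<subseteq> qvecs a n" and sub: "V.subspace C"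
    and rec: "\<forall>\<psi>. code_state a n C \<psi> \<longrightarrow>
              apply_ch a A B E Ks (reduced a n ({..<n} - T) \<psi>) = reduced a n {..<n} \<psi>"
  shows "\<exists>c. \<forall>K\<in>set Ks. \<forall>t\<in>cfgs a T. \<forall>\<psi>\<in>C. \<forall>y\<in>cfgs a {..<n}.
            op_apply a A B E K (slice T t \<psi>) y = c K t * \<psi> y"
proof -
  have supp: "C \<subseteq> supported a {..<n}" using Cq by (simp add: qvecs_eq_supported)
  have "\<exists>c. \<forall>\<psi>\<in>C. \<forall>y\<in>cfgs a {..<n}. op_apply a A B E K (slice T t \<psi>) y = c * \<psi> y"
    if K: "K \<in> set Ks" and t: "t \<in> cfgs a T" for K t
  proof (rule scalar_if_every_vector_eigen[OF sub supp])
    fix \<psi> assume psi: "\<psi> \<in> C"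
    show "\<exists>c. \<forall>y\<in>cfgs a {..<n}. op_apply a A B E K (slice T t \<psi>) y = c * \<psi> y"
    proof (cases "\<psi> = 0")
      case True
      then show ?thesis using op_apply_slice_scale[of a A B E K T t 0 0] by auto
    next
      case False
      then obtain s \<psi>' where cs: "code_state a n C \<psi>'" and "\<psi> = vscale s \<psi>'"
        using code_state_rescale[OF Cq sub psi] by blast
      moreover obtain c where "\<forall>y\<in>cfgs a {..<n}. op_apply a A B E K (slice T t \<psi>') y = c * \<psi>' y"
        using recovery_scalar_on_code_state[OF TN AE BE _ _ K t] rec cs
        unfolding code_state_def by blast
      ultimately show ?thesis by (auto simp: op_apply_slice_scale)
    qed
  qed (simp_all add: op_apply_slice_add op_apply_slice_scale)
  then show ?thesis by metis
qed

section \<open>The Knill-Laflamme condition\<close>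

text \<open>The Knill-Laflamme condition for the erasure of the qudits T: the matrix elements
  of every operator |t><t'| acting on T are, on the code, a multiple M t t' of the identity.\<close>
definition kl_matrix :: "nat \<Rightarrow> nat \<Rightarrow> qvec set \<Rightarrow> nat set \<Rightarrow> (cfg \<Rightarrow> cfg \<Rightarrow> complex) \<Rightarrow> bool" where
  "kl_matrix a n C T M \<longleftrightarrow> (\<forall>\<psi>\<in>C. \<forall>\<phi>\<in>C. \<forall>t\<in>cfgs a T. \<forall>t'\<in>cfgs a T.
      qinner a ({..<n} - T) (slice T t \<psi>) (slice T t' \<phi>) = M t t' * qinner a {..<n} \<psi> \<phi>)"

definition kl_correctable :: "nat \<Rightarrow> nat \<Rightarrow> qvec set \<Rightarrow> nat set \<Rightarrow> bool" where
  "kl_correctable a n C T \<longleftrightarrow> (\<exists>M. kl_matrix a n C T M)"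

lemma kl_correctable_empty: "kl_correctable a n C {}"
  unfolding kl_correctable_def kl_matrix_def by (rule exI[of _ "\<lambda>_ _. 1"]) (simp add: slice_def merge_def)

text \<open>By trace preservation (kraus_inner_slices) the inner products of slices on A \<union> E
  equal those of their images on B \<union> E, where the Kraus operators act as the scalars c K t.\<close>
lemma kl_correctable_extend:
  assumes fin: "finite A" "finite B" "finite E"
    and AE: "A \<union> E = {..<n} - T" and BE: "B \<union> E = {..<n}"
    and dis: "A \<inter> E = {}" "B \<inter> E = {}" and kr: "kraus a A B Ks"
    and c: "\<forall>K\<in>set Ks. \<forall>t\<in>cfgs a T. \<forall>\<psi>\<in>C. \<forall>y\<in>cfgs a {..<n}.
            op_apply a A B E K (slice T t \<psi>) y = c K t * \<psi> y"
    and corr: "kl_correctable a n C E'" and E'E: "E' \<subseteq> E"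
  shows "kl_correctable a n C (E' \<union> T)"
proof -
  obtain M where M: "\<forall>\<psi>\<in>C. \<forall>\<phi>\<in>C. \<forall>e\<in>cfgs a E'. \<forall>e'\<in>cfgs a E'.
      qinner a ({..<n} - E') (slice E' e \<psi>) (slice E' e' \<phi>) = M e e' * qinner a {..<n} \<psi> \<phi>"
    using corr unfolding kl_correctable_def kl_matrix_def by blast
  have scalar: "slice E' e (op_apply a A B E K (slice T t \<psi>)) w = c K t * slice E' e \<psi> w"
    if "K \<in> set Ks" "t \<in> cfgs a T" "\<psi> \<in> C" "e \<in> cfgs a E'" "w \<in> cfgs a ({..<n} - E')"
    for K t \<psi> e w
  proof -
    have "E' \<union> ({..<n} - E') = {..<n}" using E'E BE by auto
    then have "merge E' e w \<in> cfgs a {..<n}" using merge_in_cfgs[OF that(4,5)] by simp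
    then show ?thesis using c that by (simp add: slice_def)
  qed
  have main: "qinner a ({..<n} - (E' \<union> T)) (slice E' e (slice T t \<psi>)) (slice E' e' (slice T t' \<phi>))
      = (\<Sum>K\<leftarrow>Ks. c K t * cnj (c K t')) * M e e' * qinner a {..<n} \<psi> \<phi>"
    if "\<psi> \<in> C" "\<phi> \<in> C" "t \<in> cfgs a T" "t' \<in> cfgs a T" "e \<in> cfgs a E'" "e' \<in> cfgs a E'"
    for \<psi> \<phi> t t' e e'
  proof -
    have "{..<n} - (E' \<union> T) = (A \<union> E) - E'" "(B \<union> E) - E' = {..<n} - E'"
      using AE BE by auto
    then have "qinner a ({..<n} - (E' \<union> T)) (slice E' e (slice T t \<psi>)) (slice E' e' (slice T t' \<phi>))
        = (\<Sum>K\<leftarrow>Ks. qinner a ({..<n} - E') (slice E' e (op_apply a A B E K (slice T t \<psi>)))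
                                             (slice E' e' (op_apply a A B E K (slice T t' \<phi>))))"
      using kraus_inner_slices[OF kr fin dis E'E] by simp
    also have "\<dots> = (\<Sum>K\<leftarrow>Ks. c K t * cnj (c K t')
                       * qinner a ({..<n} - E') (slice E' e \<psi>) (slice E' e' \<phi>))"
    proof (rule arg_cong[where f=sum_list], rule map_cong[OF refl])
      fix K assume "K \<in> set Ks"
      then have "qinner a ({..<n} - E') (slice E' e (op_apply a A B E K (slice T t \<psi>)))
                                        (slice E' e' (op_apply a A B E K (slice T t' \<phi>)))
          = qinner a ({..<n} - E') (\<lambda>w. c K t * slice E' e \<psi> w) (\<lambda>w. c K t' * slice E' e' \<phi> w)"
        using that by (intro qinner_cong scalar)
      then show "qinner a ({..<n} - E') (slice E' e (op_apply a A B E K (slice T t \<psi>)))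
                                        (slice E' e' (op_apply a A B E K (slice T t' \<phi>)))
          = c K t * cnj (c K t') * qinner a ({..<n} - E') (slice E' e \<psi>) (slice E' e' \<phi>)"
        by (simp add: qinner_scale)
    qed
    also have "\<dots> = (\<Sum>K\<leftarrow>Ks. c K t * cnj (c K t')) * M e e' * qinner a {..<n} \<psi> \<phi>"
      using M that by (simp add: sum_list_mult_const[symmetric] mult.assoc)
    finally show ?thesis .
  qed
  show ?thesis
    unfolding kl_correctable_def kl_matrix_def
  proof (intro exI[where x="\<lambda>z z'. (\<Sum>K\<leftarrow>Ks. c K (restr T z) * cnj (c K (restr T z')))
                                    * M (restr E' z) (restr E' z')"] ballI)
    fix \<psi> \<phi> z z' assume "\<psi> \<in> C" "\<phi> \<in> C" "z \<in> cfgs a (E' \<union> T)" "z' \<in> cfgs a (E' \<union> T)"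
    then show "qinner a ({..<n} - (E' \<union> T)) (slice (E' \<union> T) z \<psi>) (slice (E' \<union> T) z' \<phi>)
        = (\<Sum>K\<leftarrow>Ks. c K (restr T z) * cnj (c K (restr T z'))) * M (restr E' z) (restr E' z')
          * qinner a {..<n} \<psi> \<phi>"
      by (simp add: slice_Un main restr_in_cfgs)
  qed
qed

lemma decodable_kl_correctable:
  assumes Cq: "C \<subseteq> qvecs a n" and sub: "V.subspace C" and SN: "S \<subseteq> {..<n}"
    and dec: "decodable a n C S"
  shows "kl_correctable a n C S"
proof -
  obtain Ks where kr: "kraus a ({..<n} - S) {..<n} Ks" and
    rec: "\<forall>\<psi>. code_state a n C \<psi> \<longrightarrow>
        apply_ch a ({..<n} - S) {..<n} {} Ks (reduced a n ({..<n} - S) \<psi>) = reduced a n {..<n} \<psi>"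
    using dec unfolding decodable_def by blast
  obtain c where "\<forall>K\<in>set Ks. \<forall>t\<in>cfgs a S. \<forall>\<psi>\<in>C. \<forall>y\<in>cfgs a {..<n}.
      op_apply a ({..<n} - S) {..<n} {} K (slice S t \<psi>) y = c K t * \<psi> y"
    using recovery_acts_as_scalar[OF SN _ _ Cq sub rec] by auto
  then have "kl_correctable a n C ({} \<union> S)"
    by (intro kl_correctable_extend[OF _ _ _ _ _ _ _ kr _ kl_correctable_empty]) auto
  then show ?thesis by simp
qed

lemma local_recovery_kl_correctable:
  assumes Cq: "C \<subseteq> qvecs a n" and sub: "V.subspace C" and loc: "qLRC_locality a n C r"
    and i: "i < n"
  obtains I where "i \<in> I" "I \<subseteq> {..<n}" "card I \<le> r"
    "\<And>E'. kl_correctable a n C E' \<Longrightarrow> E' \<subseteq> {..<n} \<Longrightarrow> E' \<inter> I = {}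
           \<Longrightarrow> kl_correctable a n C (E' \<union> {i})"
proof -
  obtain I Ks where I: "i \<in> I" "I \<subseteq> {..<n}" "card I \<le> r" and kr: "kraus a (I - {i}) I Ks"
    and rec: "\<forall>\<psi>. code_state a n C \<psi> \<longrightarrow>
         apply_ch a (I - {i}) I ({..<n} - I) Ks (reduced a n ({..<n} - {i}) \<psi>) = reduced a n {..<n} \<psi>"
    using loc i unfolding qLRC_locality_def by blast
  have finI: "finite I" using I(2) finite_subset by blast
  have AE: "(I - {i}) \<union> ({..<n} - I) = {..<n} - {i}" and BE: "I \<union> ({..<n} - I) = {..<n}"
    using I by auto
  obtain c where c: "\<forall>K\<in>set Ks. \<forall>t\<in>cfgs a {i}. \<forall>\<psi>\<in>C. \<forall>y\<in>cfgs a {..<n}.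
      op_apply a (I - {i}) I ({..<n} - I) K (slice {i} t \<psi>) y = c K t * \<psi> y"
    using recovery_acts_as_scalar[OF _ AE BE Cq sub rec] i by auto
  have "kl_correctable a n C (E' \<union> {i})"
    if "kl_correctable a n C E'" "E' \<subseteq> {..<n}" "E' \<inter> I = {}" for E'
    by (rule kl_correctable_extend[OF _ _ _ AE BE _ _ kr c that(1)]) (use finI that in auto)
  then show ?thesis using that I by blast
qed

text \<open>Greedy construction: either W is small and any (d-1)-subset is decodable, or we pick
  i \<in> W, recurse on W minus the repair group of i, and add i back by local recovery.\<close>
lemma exists_large_kl_correctable_subset:
  assumes Cq: "C \<subseteq> qvecs a n" and sub: "V.subspace C" and loc: "qLRC_locality a n C r"
    and dec: "decodes_below a n C d" and r: "r > 0" and W: "W \<subseteq> {..<n}"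
  shows "\<exists>Z\<subseteq>W. kl_correctable a n C Z \<and> min (card W) (d - 1) + (card W - (d - 1)) div r \<le> card Z"
  using W
proof (induction "card W" arbitrary: W rule: less_induct)
  case less
  have finW: "finite W" using less.prems finite_subset by blast
  show ?case
  proof (cases "card W < d - 1 + r")
    case True
    then have "(card W - (d - 1)) div r = 0" using r by (intro div_less) linarith
    moreover obtain Z where Z: "Z \<subseteq> W" "card Z = min (card W) (d - 1)"
      using obtain_subset_with_card_n[of "min (card W) (d - 1)" W] by auto
    moreover have "kl_correctable a n C Z"
    proof (cases "Z = {}")
      case True
      then show ?thesis using kl_correctable_empty by simp
    next
      case False
      then have "card Z < d" using Z finite_subset[OF Z(1) finW] by auto
      then show ?thesis
        using dec Z(1) less.prems decodable_kl_correctable[OF Cq sub] unfolding decodes_below_def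
        by auto
    qed
    ultimately show ?thesis by auto
  next
    case False
    then obtain i where iW: "i \<in> W" using r by fastforce
    then have i: "i < n" using less.prems by auto
    obtain I where I: "i \<in> I" "I \<subseteq> {..<n}" "card I \<le> r"
      and extend: "\<And>E'. kl_correctable a n C E' \<Longrightarrow> E' \<subseteq> {..<n} \<Longrightarrow> E' \<inter> I = {}
                         \<Longrightarrow> kl_correctable a n C (E' \<union> {i})"
      using local_recovery_kl_correctable[OF Cq sub loc i] by blast
    have "card (W - I) < card W" using finW iW I(1) by (intro psubset_card_mono) auto
    then obtain Z where Z: "Z \<subseteq> W - I" "kl_correctable a n C Z"
        "min (card (W - I)) (d - 1) + (card (W - I) - (d - 1)) div r \<le> card Z"
      using less.hyps less.prems by blast
    have WI: "card W - r \<le> card (W - I)"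
      using I finite_subset[OF I(2)] diff_card_le_card_Diff[of I W] by auto
    then have "min (card (W - I)) (d - 1) = d - 1" "min (card W) (d - 1) = d - 1"
      using False by auto
    moreover have "(card W - (d - 1)) div r = (card W - (d - 1) - r) div r + 1"
      using False r by (simp add: le_div_geq)
    moreover have "(card W - (d - 1) - r) div r \<le> (card (W - I) - (d - 1)) div r"
      using WI by (intro div_le_mono) simp
    ultimately have "min (card W) (d - 1) + (card W - (d - 1)) div r \<le> card Z + 1"
      using Z(3) by linarith
    moreover have "card (Z \<union> {i}) = card Z + 1"
    proof -
      have "i \<notin> Z" using Z(1) I(1) by blast
      then show ?thesis using finite_subset[OF Z(1)] finW by simp
    qed
    moreover have "kl_correctable a n C (Z \<union> {i})"
      using extend Z less.prems by blast
    moreover have "Z \<union> {i} \<subseteq> W" using Z(1) iW by auto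
    ultimately show ?thesis by metis
  qed
qed

section \<open>Dimensions of marginals\<close>

lemma (in vector_space) independent_image_if_scalars_zero:
  fixes \<Phi> :: "'c \<Rightarrow> 'b"
  assumes fin: "finite P" and zero: "\<And>u :: 'c \<Rightarrow> 'a. (\<Sum>p\<in>P. scale (u p) (\<Phi> p)) = 0 \<Longrightarrow> \<forall>p\<in>P. u p = 0"
  shows "inj_on \<Phi> P \<and> independent (\<Phi> ` P)"
proof
  show inj: "inj_on \<Phi> P"
  proof (rule inj_onI, rule ccontr)
    fix p q assume pq: "p \<in> P" "q \<in> P" "\<Phi> p = \<Phi> q" "p \<noteq> q"
    define u :: "'c \<Rightarrow> 'a" where "u x = (if x = p then 1 else if x = q then -1 else 0)" for x
    have "(\<Sum>x\<in>P. scale (u x) (\<Phi> x)) = (\<Sum>x\<in>{p, q}. scale (u x) (\<Phi> x))"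
      using pq fin by (intro sum.mono_neutral_right) (auto simp: u_def)
    also have "\<dots> = 0" using pq by (simp add: u_def)
    finally have "u p = 0" using zero pq(1) by blast
    then show False by (simp add: u_def)
  qed
  show "independent (\<Phi> ` P)"
  proof (rule independent_if_scalars_zero)
    show "finite (\<Phi> ` P)" using fin by simp
    fix f x assume "(\<Sum>x\<in>\<Phi> ` P. scale (f x) x) = 0" "x \<in> \<Phi> ` P"
    then show "f x = 0" using zero[of "f \<circ> \<Phi>"] by (auto simp: sum.reindex[OF inj])
  qed
qed

definition restrict_vec :: "nat \<Rightarrow> nat set \<Rightarrow> qvec \<Rightarrow> qvec" where
  "restrict_vec a P f = (\<lambda>z. if z \<in> cfgs a P then f z else 0)"

text \<open>The span of marginal_vecs a n C P is the support of the reduced density matrix on P of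
  the maximally mixed code state; its dimension replaces the entropy of that marginal.\<close>
definition marginal_vecs :: "nat \<Rightarrow> nat \<Rightarrow> qvec set \<Rightarrow> nat set \<Rightarrow> qvec set" where
  "marginal_vecs a n C P =
     {restrict_vec a P (slice ({..<n} - P) q \<psi>) | \<psi> q. \<psi> \<in> C \<and> q \<in> cfgs a ({..<n} - P)}"

lemma marginal_vecs_supported: "marginal_vecs a n C P \<subseteq> supported a P"
  by (auto simp: marginal_vecs_def restrict_vec_def supported_def)

lemma span_marginal_vecs_supported: "V.span (marginal_vecs a n C P) \<subseteq> supported a P"
  by (rule V.span_minimal[OF marginal_vecs_supported subspace_supported])

lemma dim_marginal_vecs_pos:
  assumes Cq: "C \<subseteq> qvecs a n" and X: "X \<subseteq> {..<n}" and psi: "\<psi> \<in> C" "\<psi> \<noteq> 0"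
  shows "0 < V.dim (marginal_vecs a n C X)"
proof -
  obtain z where z: "\<psi> z \<noteq> 0" using psi(2) by (auto simp: fun_eq_iff)
  then have zc: "z \<in> cfgs a {..<n}" using psi(1) Cq by (auto simp: qvecs_def)
  define g where "g = restrict_vec a X (slice ({..<n} - X) (restr ({..<n} - X) z) \<psi>)"
  have "g \<in> marginal_vecs a n C X"
    unfolding g_def marginal_vecs_def using psi(1) zc by (auto intro!: restr_in_cfgs)
  moreover have "g (restr X z) = \<psi> z"
    using zc X merge_restr_cfgs[of z a "{..<n} - X" X] restr_in_cfgs[OF zc, of X]
    by (simp add: g_def restrict_vec_def slice_def Un_absorb2)
  then have "g \<noteq> 0" using z by force
  then have "V.independent {g}" by simp
  ultimately have "card {g} \<le> V.dim (marginal_vecs a n C X)"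
    using independent_card_le_dim_supported[OF _ _ _ marginal_vecs_supported] X finite_subset
    by (metis V.span_base empty_subsetI finite_lessThan insert_subset)
  then show ?thesis by simp
qed

text \<open>The partial inner product (<f| \<otimes> 1)|psi> of psi with f over the qudits X.\<close>
definition contract :: "nat \<Rightarrow> nat \<Rightarrow> nat set \<Rightarrow> qvec \<Rightarrow> qvec \<Rightarrow> qvec" where
  "contract a n X \<psi> f = (\<lambda>z. \<Sum>x\<in>cfgs a X. cnj (f x) * restrict_vec a ({..<n} - X) (slice X x \<psi>) z)"

definition kl_form :: "nat \<Rightarrow> nat set \<Rightarrow> (cfg \<Rightarrow> cfg \<Rightarrow> complex) \<Rightarrow> qvec \<Rightarrow> qvec \<Rightarrow> complex" where
  "kl_form a X M f g = (\<Sum>x\<in>cfgs a X. \<Sum>x'\<in>cfgs a X. cnj (f x) * g x' * M x x')"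

lemma contract_in_span:
  assumes "\<psi> \<in> C" "X \<subseteq> {..<n}"
  shows "contract a n X \<psi> f \<in> V.span (marginal_vecs a n C ({..<n} - X))"
proof -
  have "{..<n} - ({..<n} - X) = X" using assms(2) by auto
  then have "restrict_vec a ({..<n} - X) (slice X x \<psi>) \<in> marginal_vecs a n C ({..<n} - X)"
    if "x \<in> cfgs a X" for x
    using assms(1) that unfolding marginal_vecs_def by auto
  moreover have "contract a n X \<psi> f
      = (\<Sum>x\<in>cfgs a X. vscale (cnj (f x)) (restrict_vec a ({..<n} - X) (slice X x \<psi>)))"
    by (simp add: contract_def fun_eq_iff sum_fun_apply)
  ultimately show ?thesis by (auto intro: V.span_sum V.span_scale V.span_base)
qed

lemma qinner_contract:
  assumes M: "kl_matrix a n C X M" and psi: "\<psi> \<in> C" "\<phi> \<in> C"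
  shows "qinner a ({..<n} - X) (contract a n X \<psi> f) (contract a n X \<phi> g)
         = kl_form a X M f g * qinner a {..<n} \<psi> \<phi>"
proof -
  let ?Q = "{..<n} - X"
  have "qinner a ?Q (contract a n X \<psi> f) (contract a n X \<phi> g)
      = (\<Sum>z\<in>cfgs a ?Q. \<Sum>x\<in>cfgs a X. \<Sum>x'\<in>cfgs a X.
           (cnj (f x) * g x') * (slice X x \<psi> z * cnj (slice X x' \<phi> z)))"
    unfolding qinner_def contract_def cnj_sum sum_product
    by (intro sum.cong refl) (simp add: restrict_vec_def mult_ac)
  also have "\<dots> = (\<Sum>x\<in>cfgs a X. \<Sum>x'\<in>cfgs a X. (cnj (f x) * g x') * qinner a ?Q (slice X x \<psi>) (slice X x' \<phi>))"
    unfolding qinner_def sum_distrib_left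
    by (rule trans[OF sum.swap], rule sum.cong[OF refl], rule sum.swap)
  also have "\<dots> = (\<Sum>x\<in>cfgs a X. \<Sum>x'\<in>cfgs a X. (cnj (f x) * g x') * (M x x' * qinner a {..<n} \<psi> \<phi>))"
    using M psi unfolding kl_matrix_def by (intro sum.cong refl) simp
  also have "\<dots> = kl_form a X M f g * qinner a {..<n} \<psi> \<phi>"
    by (simp add: kl_form_def sum_distrib_right sum_distrib_left mult_ac)
  finally show ?thesis .
qed

lemma contract_apply:
  assumes "z \<in> cfgs a ({..<n} - X)"
  shows "contract a n X \<psi> f z = cnj (qinner a X f (restrict_vec a X (slice ({..<n} - X) z \<psi>)))"
  using assms by (simp add: contract_def qinner_def restrict_vec_def slice_def merge_commute_cfgs)

lemma kl_form_definite:
  assumes M: "kl_matrix a n C X M" and X: "X \<subseteq> {..<n}"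
    and f: "f \<in> V.span (marginal_vecs a n C X)" and f0: "kl_form a X M f f = 0"
  shows "f = 0"
proof -
  have "qinner a X f g = 0" if g: "g \<in> marginal_vecs a n C X" for g
  proof -
    obtain \<psi> q where pq: "\<psi> \<in> C" "q \<in> cfgs a ({..<n} - X)"
      "g = restrict_vec a X (slice ({..<n} - X) q \<psi>)"
      using g unfolding marginal_vecs_def by blast
    have "qinner a ({..<n} - X) (contract a n X \<psi> f) (contract a n X \<psi> f) = 0"
      using qinner_contract[OF M pq(1) pq(1)] f0 by simp
    then have "contract a n X \<psi> f q = 0" using qinner_self_eq_0D pq(2) by blast
    then show ?thesis using contract_apply[OF pq(2)] pq(3) by simp
  qed
  then have "qinner a X f f = 0" using f by (rule qinner_orthogonal_span)
  then have "f z = 0" if "z \<in> cfgs a X" for z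
    using qinner_self_eq_0D[OF _ _ that] X finite_subset by blast
  moreover have "f z = 0" if "z \<notin> cfgs a X" for z
    using f span_marginal_vecs_supported[of a n C X] that unfolding supported_def by blast
  ultimately show ?thesis by (auto simp: fun_eq_iff)
qed

text \<open>Testing against the code vector whose coordinates in the basis Bc are the kl_form values
  turns the vanishing sum into kl_form (g \<psi>0) (g \<psi>0) = 0.\<close>
lemma contract_sum_eq_0D:
  assumes Cq: "C \<subseteq> qvecs a n" and sub: "V.subspace C" and X: "X \<subseteq> {..<n}"
    and M: "kl_matrix a n C X M" and Bc: "Bc \<subseteq> C" "V.independent Bc" "finite Bc"
    and g: "\<And>\<psi>. g \<psi> \<in> V.span (marginal_vecs a n C X)"
    and sum0: "(\<Sum>\<psi>\<in>Bc. contract a n X \<psi> (g \<psi>)) = 0" and psi0: "\<psi>0 \<in> Bc"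
  shows "g \<psi>0 = 0"
proof -
  define \<phi> where "\<phi> = (\<Sum>\<psi>\<in>Bc. vscale (kl_form a X M (g \<psi>) (g \<psi>0)) \<psi>)"
  have phiC: "\<phi> \<in> C"
    unfolding \<phi>_def using Bc(1) sub by (intro V.subspace_sum V.subspace_scale) auto
  have expand: "qinner a {..<n} \<phi> w
      = (\<Sum>\<psi>\<in>Bc. kl_form a X M (g \<psi>) (g \<psi>0) * qinner a {..<n} \<psi> w)" for w
    unfolding \<phi>_def by (simp add: qinner_sum_left[OF Bc(3)] qinner_scale_left)
  have "qinner a {..<n} \<phi> \<phi>
      = (\<Sum>\<psi>\<in>Bc. kl_form a X M (g \<psi>) (g \<psi>0) * qinner a {..<n} \<psi> \<phi>)"
    by (rule expand)
  also have "\<dots> = (\<Sum>\<psi>\<in>Bc. qinner a ({..<n} - X) (contract a n X \<psi> (g \<psi>)) (contract a n X \<phi> (g \<psi>0)))"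
    by (rule sum.cong[OF refl], rule qinner_contract[OF M _ phiC, symmetric]) (use Bc(1) in auto)
  also have "\<dots> = qinner a ({..<n} - X) (\<Sum>\<psi>\<in>Bc. contract a n X \<psi> (g \<psi>)) (contract a n X \<phi> (g \<psi>0))"
    by (simp add: qinner_sum_left[OF Bc(3)])
  also have "\<dots> = 0" unfolding sum0 by (simp add: qinner_def)
  finally have "qinner a {..<n} \<phi> \<phi> = 0" .
  then have "\<phi> y = 0" if "y \<in> cfgs a {..<n}" for y
    using qinner_self_eq_0D[OF finite_lessThan _ that] by blast
  moreover have "\<phi> y = 0" if "y \<notin> cfgs a {..<n}" for y
    using subsetD[OF Cq phiC] that by (simp add: qvecs_def)
  ultimately have "\<phi> = 0" by (auto simp: fun_eq_iff)
  then have "kl_form a X M (g \<psi>0) (g \<psi>0) = 0"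
    using V.independentD[OF Bc(2) Bc(3) subset_refl, of "\<lambda>\<psi>. kl_form a X M (g \<psi>) (g \<psi>0)"] psi0
    unfolding \<phi>_def by simp
  then show ?thesis using kl_form_definite[OF M X g] by blast
qed

lemma contract_family_independent:
  assumes Cq: "C \<subseteq> qvecs a n" and sub: "V.subspace C" and X: "X \<subseteq> {..<n}"
    and M: "kl_matrix a n C X M" and Bc: "Bc \<subseteq> C" "V.independent Bc" "finite Bc"
    and Bs: "Bs \<subseteq> marginal_vecs a n C X" "V.independent Bs" "finite Bs"
  shows "inj_on (\<lambda>(\<psi>, f). contract a n X \<psi> f) (Bc \<times> Bs)
         \<and> V.independent ((\<lambda>(\<psi>, f). contract a n X \<psi> f) ` (Bc \<times> Bs))"
proof (rule V.independent_image_if_scalars_zero)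
  show "finite (Bc \<times> Bs)" using Bc(3) Bs(3) by simp
  fix u assume sum0: "(\<Sum>p\<in>Bc \<times> Bs. vscale (u p) ((\<lambda>(\<psi>, f). contract a n X \<psi> f) p)) = 0"
  define g where "g \<psi> = (\<Sum>f\<in>Bs. vscale (cnj (u (\<psi>, f))) f)" for \<psi>
  have g_span: "g \<psi> \<in> V.span (marginal_vecs a n C X)" for \<psi>
    unfolding g_def using Bs(1) by (intro V.span_sum V.span_scale V.span_base) auto
  have "contract a n X \<psi> (g \<psi>) = (\<Sum>f\<in>Bs. vscale (u (\<psi>, f)) (contract a n X \<psi> f))" for \<psi>
  proof
    fix z
    have "contract a n X \<psi> (g \<psi>) z = (\<Sum>x\<in>cfgs a X. \<Sum>f\<in>Bs.
            u (\<psi>, f) * (cnj (f x) * restrict_vec a ({..<n} - X) (slice X x \<psi>) z))"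
      by (simp add: contract_def g_def sum_fun_apply sum_distrib_right mult_ac)
    also have "\<dots> = (\<Sum>f\<in>Bs. vscale (u (\<psi>, f)) (contract a n X \<psi> f)) z"
      by (subst sum.swap) (simp add: contract_def sum_fun_apply sum_distrib_left)
    finally show "contract a n X \<psi> (g \<psi>) z = (\<Sum>f\<in>Bs. vscale (u (\<psi>, f)) (contract a n X \<psi> f)) z" .
  qed
  then have "(\<Sum>\<psi>\<in>Bc. contract a n X \<psi> (g \<psi>)) = 0"
    using sum0 by (simp add: sum.cartesian_product split_def)
  then have "g \<psi> = 0" if "\<psi> \<in> Bc" for \<psi>
    using contract_sum_eq_0D[where g=g, OF Cq sub X M Bc g_span] that by blast
  then have "cnj (u (\<psi>, f)) = 0" if "\<psi> \<in> Bc" "f \<in> Bs" for \<psi> f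
    using V.independentD[OF Bs(2) Bs(3) subset_refl, of "\<lambda>f. cnj (u (\<psi>, f))"] that
    unfolding g_def by blast
  then show "\<forall>p\<in>Bc \<times> Bs. u p = 0" by auto
qed

lemma kl_correctable_dim_mult_le:
  assumes Cq: "C \<subseteq> qvecs a n" and sub: "V.subspace C" and X: "X \<subseteq> {..<n}"
    and corr: "kl_correctable a n C X"
  shows "V.dim C * V.dim (marginal_vecs a n C X) \<le> V.dim (marginal_vecs a n C ({..<n} - X))"
proof -
  obtain M where M: "kl_matrix a n C X M" using corr unfolding kl_correctable_def by blast
  have fX: "finite X" using X finite_subset by blast
  obtain Bc where Bc: "Bc \<subseteq> C" "V.independent Bc" "C \<subseteq> V.span Bc" "card Bc = V.dim C" "finite Bc"
    using finite_basis_supported[of "{..<n}" C a] Cq by (auto simp: qvecs_eq_supported)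
  obtain Bs where Bs: "Bs \<subseteq> marginal_vecs a n C X" "V.independent Bs"
      "marginal_vecs a n C X \<subseteq> V.span Bs" "card Bs = V.dim (marginal_vecs a n C X)" "finite Bs"
    using finite_basis_supported[OF fX marginal_vecs_supported] by blast
  let ?\<Phi> = "\<lambda>(\<psi>, f). contract a n X \<psi> f"
  have inj: "inj_on ?\<Phi> (Bc \<times> Bs)" and indep: "V.independent (?\<Phi> ` (Bc \<times> Bs))"
    using contract_family_independent[OF Cq sub X M Bc(1,2,5) Bs(1,2,5)] by auto
  have "?\<Phi> ` (Bc \<times> Bs) \<subseteq> V.span (marginal_vecs a n C ({..<n} - X))"
    using contract_in_span[OF _ X] Bc(1) by auto
  then have "card (?\<Phi> ` (Bc \<times> Bs)) \<le> V.dim (marginal_vecs a n C ({..<n} - X))"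
    using independent_card_le_dim_supported[OF _ indep _ marginal_vecs_supported] by blast
  then show ?thesis using card_image[OF inj] Bc(4) Bs(4) by (simp add: card_cartesian_product)
qed

text \<open>The vector f \<otimes> |r> on the qudits P \<union> R.\<close>
definition tensor_ket :: "nat \<Rightarrow> nat set \<Rightarrow> nat set \<Rightarrow> qvec \<Rightarrow> cfg \<Rightarrow> qvec" where
  "tensor_ket a P R f r = (\<lambda>z. if z \<in> cfgs a (P \<union> R) \<and> restr R z = r then f (restr P z) else 0)"

lemma tensor_ket_in_span:
  assumes "f \<in> V.span S"
  shows "tensor_ket a P R f r \<in> V.span ((\<lambda>f. tensor_ket a P R f r) ` S)"
proof -
  let ?U = "{f. tensor_ket a P R f r \<in> V.span ((\<lambda>f. tensor_ket a P R f r) ` S)}"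
  have lin: "tensor_ket a P R 0 r = 0"
    "tensor_ket a P R (f + g) r = tensor_ket a P R f r + tensor_ket a P R g r"
    "tensor_ket a P R (vscale c f) r = vscale c (tensor_ket a P R f r)" for f g c
    by (auto simp: tensor_ket_def fun_eq_iff)
  have "V.subspace ?U"
    by (rule V.subspaceI) (auto simp: lin V.span_zero intro: V.span_add V.span_scale)
  moreover have "S \<subseteq> ?U" by (auto intro: V.span_base)
  ultimately show ?thesis using V.span_minimal assms by blast
qed

lemma marginal_vec_Un_decomp:
  assumes PR: "P \<inter> R = {}" "P \<union> R \<subseteq> {..<n}" and fR: "finite R"
    and g: "g \<in> marginal_vecs a n C (P \<union> R)"
  obtains F where "\<And>r. r \<in> cfgs a R \<Longrightarrow> F r \<in> marginal_vecs a n C P"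
    "g = (\<Sum>r\<in>cfgs a R. tensor_ket a P R (F r) r)"
proof -
  let ?Q = "{..<n} - (P \<union> R)"
  obtain \<psi> q where pq: "\<psi> \<in> C" "q \<in> cfgs a ?Q" "g = restrict_vec a (P \<union> R) (slice ?Q q \<psi>)"
    using g unfolding marginal_vecs_def by blast
  define F where "F r = restrict_vec a P (slice ({..<n} - P) (merge ?Q q r) \<psi>)" for r
  have "F r \<in> marginal_vecs a n C P" if "r \<in> cfgs a R" for r
  proof -
    have "?Q \<union> R = {..<n} - P" using PR by auto
    then show ?thesis
      using merge_in_cfgs[OF pq(2) that] pq(1) unfolding F_def marginal_vecs_def by auto
  qed
  moreover have "g = (\<Sum>r\<in>cfgs a R. tensor_ket a P R (F r) r)"
  proof
    fix z
    show "g z = (\<Sum>r\<in>cfgs a R. tensor_ket a P R (F r) r) z"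
    proof (cases "z \<in> cfgs a (P \<union> R)")
      case False
      then show ?thesis by (simp add: pq(3) restrict_vec_def sum_fun_apply tensor_ket_def)
    next
      case True
      have rz: "restr R z \<in> cfgs a R" "restr P z \<in> cfgs a P"
        using True by (auto intro!: restr_in_cfgs)
      have "(\<Sum>r\<in>cfgs a R. tensor_ket a P R (F r) r) z = F (restr R z) (restr P z)"
        using True rz fR by (simp add: sum_fun_apply tensor_ket_def eq_commute[of "restr R z"])
      also have "\<dots> = \<psi> (merge ({..<n} - P) (merge ?Q q (restr R z)) (restr P z))"
        using rz by (simp add: F_def restrict_vec_def slice_def)
      also have "merge ({..<n} - P) (merge ?Q q (restr R z)) (restr P z) = merge ?Q q z"
        using True pq(2) PR by (auto simp: merge_def restr_def cfgs_def fun_eq_iff)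
      finally show ?thesis using True by (simp add: pq(3) restrict_vec_def slice_def)
    qed
  qed
  ultimately show ?thesis using that by blast
qed

lemma dim_marginal_vecs_Un_le:
  assumes PR: "P \<inter> R = {}" "P \<union> R \<subseteq> {..<n}"
  shows "V.dim (marginal_vecs a n C (P \<union> R)) \<le> V.dim (marginal_vecs a n C P) * a ^ card R"
proof -
  have fP: "finite P" and fR: "finite R" using PR finite_subset by auto
  obtain Bp where Bp: "Bp \<subseteq> marginal_vecs a n C P" "V.independent Bp"
      "marginal_vecs a n C P \<subseteq> V.span Bp" "card Bp = V.dim (marginal_vecs a n C P)" "finite Bp"
    using finite_basis_supported[OF fP marginal_vecs_supported] by blast
  define T where "T = (\<lambda>(f, r). tensor_ket a P R f r) ` (Bp \<times> cfgs a R)"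
  have tensor: "tensor_ket a P R f r \<in> V.span T"
    if "f \<in> marginal_vecs a n C P" "r \<in> cfgs a R" for f r
  proof -
    have "tensor_ket a P R f r \<in> V.span ((\<lambda>f. tensor_ket a P R f r) ` Bp)"
      using tensor_ket_in_span Bp(3) that(1) by blast
    also have "\<dots> \<subseteq> V.span T" using that(2) by (intro V.span_mono) (auto simp: T_def)
    finally show ?thesis .
  qed
  have "marginal_vecs a n C (P \<union> R) \<subseteq> V.span T"
  proof
    fix g assume "g \<in> marginal_vecs a n C (P \<union> R)"
    then obtain F where F: "\<And>r. r \<in> cfgs a R \<Longrightarrow> F r \<in> marginal_vecs a n C P"
        "g = (\<Sum>r\<in>cfgs a R. tensor_ket a P R (F r) r)"
      using marginal_vec_Un_decomp[OF PR fR] by blast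
    show "g \<in> V.span T" unfolding F(2) by (intro V.span_sum tensor F(1))
  qed
  then have "V.dim (marginal_vecs a n C (P \<union> R)) \<le> card T"
    by (rule V.dim_le_card) (simp add: T_def Bp(5) fR)
  also have "\<dots> \<le> card (Bp \<times> cfgs a R)"
    unfolding T_def by (rule card_image_le) (simp add: Bp(5) fR)
  also have "\<dots> = V.dim (marginal_vecs a n C P) * a ^ card R"
    using Bp(4) card_cfgs[OF fR] by (simp add: card_cartesian_product)
  finally show ?thesis .
qed

section \<open>The Singleton-type bound\<close>

lemma le_of_cross_mult_le:
  fixes m A p q :: nat
  assumes "m * p \<le> q * A" "m * q \<le> p * A" "0 < p"
  shows "m \<le> A"
proof -
  have "m * (p + q) \<le> A * (p + q)" using assms(1,2) by (simp add: algebra_simps)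
  then show ?thesis using assms(3) by simp
qed

lemma kl_correctable_disjoint_dim_le:
  assumes Cq: "C \<subseteq> qvecs a n" and sub: "V.subspace C" and pos: "0 < V.dim C"
    and X: "X \<subseteq> {..<n}" and Y: "Y \<subseteq> {..<n}" and XY: "X \<inter> Y = {}"
    and KX: "kl_correctable a n C X" and KY: "kl_correctable a n C Y"
  shows "V.dim C \<le> a ^ (n - card X - card Y)"
proof -
  define R where "R = {..<n} - X - Y"
  obtain Bc where Bc: "Bc \<subseteq> C" "V.independent Bc" "C \<subseteq> V.span Bc" "card Bc = V.dim C"
    by (rule V.basis_exists)
  then obtain \<psi> where "\<psi> \<in> Bc" using pos by (metis card.empty ex_in_conv less_irrefl)
  then have psi: "\<psi> \<in> C" "\<psi> \<noteq> 0" using Bc(1,2) V.dependent_zero by auto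
  have "V.dim C * V.dim (marginal_vecs a n C X) \<le> V.dim (marginal_vecs a n C Y) * a ^ card R"
  proof -
    have "{..<n} - X = Y \<union> R" "Y \<inter> R = {}" "Y \<union> R \<subseteq> {..<n}" using Y XY by (auto simp: R_def)
    then show ?thesis
      using kl_correctable_dim_mult_le[OF Cq sub X KX] dim_marginal_vecs_Un_le[of Y R n a C] by simp
  qed
  moreover have "V.dim C * V.dim (marginal_vecs a n C Y) \<le> V.dim (marginal_vecs a n C X) * a ^ card R"
  proof -
    have "{..<n} - Y = X \<union> R" "X \<inter> R = {}" "X \<union> R \<subseteq> {..<n}" using X XY by (auto simp: R_def)
    then show ?thesis
      using kl_correctable_dim_mult_le[OF Cq sub Y KY] dim_marginal_vecs_Un_le[of X R n a C] by simp
  qed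
  moreover have "0 < V.dim (marginal_vecs a n C X)"
    using dim_marginal_vecs_pos[OF Cq X psi] .
  ultimately have "V.dim C \<le> a ^ card R"
    using le_of_cross_mult_le by blast
  moreover have "card R = n - card X - card Y"
  proof -
    have "finite X" "finite Y" using X Y finite_subset by auto
    moreover have "R = {..<n} - (X \<union> Y)" by (auto simp: R_def)
    ultimately show ?thesis using X Y XY by (simp add: card_Diff_subset card_Un_disjoint)
  qed
  ultimately show ?thesis by simp
qed

lemma quantum_singleton_bound:
  assumes a: "2 \<le> a" and code: "quantum_code a n k C"
    and X: "X \<subseteq> {..<n}" and Y: "Y \<subseteq> {..<n}" and XY: "X \<inter> Y = {}"
    and KX: "kl_correctable a n C X" and KY: "kl_correctable a n C Y"
  shows "k + card X + card Y \<le> n"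
proof -
  have Cq: "C \<subseteq> qvecs a n" and sub: "V.subspace C" and dimC: "V.dim C = a ^ k"
    using code unfolding quantum_code_def by auto
  then have "a ^ k \<le> a ^ (n - card X - card Y)"
    using kl_correctable_disjoint_dim_le[OF Cq sub _ X Y XY KX KY] a by simp
  then have "k \<le> n - card X - card Y" using a by (simp add: power_le_imp_le_exp)
  moreover have "card X + card Y \<le> n"
    using card_mono[OF _ Un_least[OF X Y]] card_Un_disjoint[OF _ _ XY] X Y finite_subset
    by fastforce
  ultimately show ?thesis by linarith
qed

section \<open>Distance, locality and the final arithmetic\<close>

lemma decodable_empty: "decodable a n C {}"
proof -
  define Id :: qop where "Id = (\<lambda>y x. if x = y \<and> x \<in> cfgs a {..<n} then 1 else 0)"
  have "kraus a {..<n} {..<n} [Id]"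
    unfolding kraus_def
  proof (intro conjI ballI allI impI)
    fix x x' assume x: "x \<in> cfgs a {..<n}" "x' \<in> cfgs a {..<n}"
    have "cnj (Id y x) * Id y x' = (if y = x then (if x = x' then 1 else 0) else 0)" for y
      using x by (auto simp: Id_def)
    then show "(\<Sum>K\<leftarrow>[Id]. \<Sum>y\<in>cfgs a {..<n}. cnj (K y x) * K y x') = (if x = x' then 1 else 0)"
      using x by simp
  qed (auto simp: Id_def split: if_splits)
  moreover have "apply_ch a {..<n} {..<n} {} [Id] (reduced a n {..<n} \<psi>) = reduced a n {..<n} \<psi>" for \<psi>
  proof (intro ext)
    fix y y'
    show "apply_ch a {..<n} {..<n} {} [Id] (reduced a n {..<n} \<psi>) y y' = reduced a n {..<n} \<psi> y y'"
    proof (cases "y \<in> cfgs a {..<n} \<and> y' \<in> cfgs a {..<n}")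
      case True
      have "merge {..<n} x (restr {} w) = x" "restr {..<n} x = x" if "x \<in> cfgs a {..<n}" for x w
        using that by (auto simp: merge_def restr_def cfgs_def fun_eq_iff)
      moreover have "Id y x = (if x = y then 1 else 0)" "Id y' x = (if x = y' then 1 else 0)" for x
        using True by (auto simp: Id_def)
      ultimately have "apply_ch a {..<n} {..<n} {} [Id] (reduced a n {..<n} \<psi>) y y'
          = (\<Sum>x\<in>cfgs a {..<n}. \<Sum>x'\<in>cfgs a {..<n}.
               (if x = y then 1 else 0) * reduced a n {..<n} \<psi> x x' * cnj (if x' = y' then 1 else 0))"
        using True by (simp add: apply_ch_def cong: sum.cong)
      also have "\<dots> = reduced a n {..<n} \<psi> y y'"
      proof -
        have "(if P then 1 else 0) * c = (if P then c else 0)"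
          "c * cnj (if P then 1 else 0) = (if P then c else 0)" for P and c :: complex
          by simp_all
        then show ?thesis using True by (simp add: sum.delta)
      qed
      finally show ?thesis .
    next
      case False
      then show ?thesis by (auto simp: apply_ch_def reduced_def)
    qed
  qed
  ultimately show ?thesis unfolding decodable_def by auto
qed

lemma code_distance_ge_1: "code_distance a n C d \<Longrightarrow> 1 \<le> d"
  using decodable_empty[of a n C] card_0_eq[OF finite_subset[of _ "{..<n}"]]
  unfolding code_distance_def decodes_below_def by (cases d) auto

lemma qLRC_locality_pos: "qLRC_locality a n C r \<Longrightarrow> 0 < n \<Longrightarrow> 0 < r"
  unfolding qLRC_locality_def
  by (metis card_gt_0_iff empty_iff finite_lessThan finite_subset less_le_trans not_le)

lemma diff_div_mono:
  fixes r w w' :: nat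
  assumes r: "0 < r" and le: "w \<le> w'"
  shows "w - w div r \<le> w' - w' div r"
  using le
proof (induction w' rule: dec_induct)
  case base
  then show ?case by simp
next
  case (step m)
  have "Suc m div r \<le> (m + r) div r" by (rule div_le_mono) (use r in simp)
  then have "Suc m div r \<le> m div r + 1" using r by simp
  moreover have "m div r \<le> m" by simp
  ultimately show ?case using step.IH by linarith
qed

lemma greedy_sizes_floor_bound:
  fixes n k d r x y :: nat
  assumes r: "0 < r" and d: "1 \<le> d" and k: "0 < k" and kxy: "k + x + y \<le> n"
    and hx: "min n (d - 1) + (n - (d - 1)) div r \<le> x"
    and hy: "min (n - x) (d - 1) + (n - x - (d - 1)) div r \<le> y"
  shows "int k \<le> int n - 2 * (int d - 1)
          - \<lfloor>(real n - (real d - 1)) / real r\<rfloor>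
          - \<lfloor>(real n - 2 * (real d - 1) - real_of_int \<lfloor>(real n - (real d - 1)) / real r\<rfloor>) / real r\<rfloor>"
proof -
  define D where "D = d - 1"
  define f where "f = (n - D) div r"
  define w where "w = n - 2 * D - f"
  have nx: "D \<le> n - x"
  proof (rule ccontr)
    assume "\<not> D \<le> n - x"
    then have "n - x \<le> y" using hy by (simp add: D_def)
    then show False using kxy k by linarith
  qed
  then have hx': "D + f \<le> x" and hy': "D + (n - x - D) div r \<le> y"
    using hx hy by (simp_all add: D_def f_def)
  have w: "2 * D + f \<le> n" using hx' hy' kxy by linarith
  have "k \<le> (n - x - D) - (n - x - D) div r" using hy' kxy by simp
  also have "\<dots> \<le> w - w div r" using hx' by (intro diff_div_mono r) (simp add: w_def)
  finally have k_le: "int k \<le> int w - int (w div r)" using div_le_dividend[of w r] by linarith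
  have f_eq: "\<lfloor>(real n - (real d - 1)) / real r\<rfloor> = int f"
  proof -
    have "real n - (real d - 1) = real (n - D)" using d w by (simp add: D_def of_nat_diff)
    then show ?thesis unfolding f_def by (simp add: floor_divide_of_nat_eq)
  qed
  have w_eq: "\<lfloor>(real n - 2 * (real d - 1) - real_of_int (int f)) / real r\<rfloor> = int (w div r)"
  proof -
    have "real n - 2 * (real d - 1) - real_of_int (int f) = real w"
      using d w by (simp add: D_def w_def)
    then show ?thesis by (simp add: floor_divide_of_nat_eq)
  qed
  have d_eq: "int d - 1 = int D" and "int w = int n - 2 * int D - int f"
    using d w by (simp_all add: D_def w_def)
  then show ?thesis unfolding f_eq w_eq d_eq using k_le by linarith
qed

theorem theorem3p1:
  fixes a n k d r :: nat and C :: "qvec set"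
  assumes "a \<ge> 2"
    and "quantum_code a n k C"
    and "k > 0"
    and "code_distance a n C d"
    and "qLRC_locality a n C r"
  shows "int k \<le> int n - 2 * (int d - 1)
          - \<lfloor>(real n - (real d - 1)) / real r\<rfloor>
          - \<lfloor>(real n - 2 * (real d - 1) - real_of_int \<lfloor>(real n - (real d - 1)) / real r\<rfloor>) / real r\<rfloor>"
proof -
  have Cq: "C \<subseteq> qvecs a n" and sub: "V.subspace C"
    using assms(2) unfolding quantum_code_def by auto
  have dec: "decodes_below a n C d" using assms(4) unfolding code_distance_def by simp
  have "0 < n" using quantum_singleton_bound[OF assms(1,2), of "{}" "{}"] kl_correctable_empty assms(3) by simp
  then have r: "0 < r" using qLRC_locality_pos[OF assms(5)] by simp
  note large = exists_large_kl_correctable_subset[OF Cq sub assms(5) dec r]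
  obtain X where X: "X \<subseteq> {..<n}" "kl_correctable a n C X"
      "min n (d - 1) + (n - (d - 1)) div r \<le> card X"
    using large[of "{..<n}"] by auto
  have "card ({..<n} - X) = n - card X" by (simp add: card_Diff_subset finite_subset[OF X(1)] X(1))
  then obtain Y where Y: "Y \<subseteq> {..<n} - X" "kl_correctable a n C Y"
      "min (n - card X) (d - 1) + (n - card X - (d - 1)) div r \<le> card Y"
    using large[of "{..<n} - X"] by auto
  have "k + card X + card Y \<le> n"
    using quantum_singleton_bound[OF assms(1,2) X(1) _ _ X(2) Y(2)] Y(1) by auto
  then show ?thesis
    using greedy_sizes_floor_bound[OF r code_distance_ge_1[OF assms(4)] assms(3)] X(3) Y(3) by blast
qed

end
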